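(* Let $\mathcal{I}$ be a finite index set and, for each $i\in\mathcal{I}$, let $\mathcal{A}_i$ be a finite set with $|\mathcal{A}_i|\ge 2$. Let $\mathcal{Y}\subseteq\mathcal{I}$, let $h_i:\mathcal{A}_i\to(0,\infty)$ for $i\in\mathcal{Y}$, and let $\mathcal{B}\subseteq\prod_{i\in\mathcal{I}}\mathcal{A}_i$ be a set of configurations such that the projection $\mathbf{P}_{\mathcal{Y}}(\mathbf{x})=(x_i)_{i\in\mathcal{Y}}$ is injective on $\mathcal{B}$. For each $i\in\mathcal{Y}$ fix $\alpha_i\in\mathcal{A}_i$ and put $\mathcal{A}_i^-=\mathcal{A}_i\setminus\{\alpha_i\}$. Define $\boldsymbol{\Xi}(\mathbf{x}_{\mathcal{Y}})=\big(([\gamma=x_i])_{\gamma\in\mathcal{A}_i}\big)_{i\in\mathcal{Y}}\in\{0,1\}^{\sum_{i\in\mathcal{Y}}|\mathcal{A}_i|}$ and $\tilde{\boldsymbol{\Xi}}(\mathbf{x}_{\mathcal{Y}})=\big(([\gamma=x_i])_{\gamma\in\mathcal{A}_i^-}\big)_{i\in\mathcal{Y}}\in\{0,1\}^{\sum_{i\in\mathcal{Y}}|\mathcal{A}_i^-|}$, where $[P]$ is $1$ if $P$ holds and $0$ otherwise. Let $\boldsymbol{\lambda}$ have coordinates $\lambda_i^{(\alpha)}=\log h_i(\alpha)$ ($i\in\mathcal{Y},\alpha\in\mathcal{A}_i$) and $\tilde{\boldsymbol{\lambda}}$ have coordinates $\tilde\lambda_i^{(\alpha)}=\log\big(h_i(\alpha)/h_i(\alpha_i)\big)$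 ($i\in\mathcal{Y},\alpha\in\mathcal{A}_i^-$). Let $\mathcal{K}_{\mathcal{Y}}(\mathcal{B})$ be the convex hull of $\{\boldsymbol{\Xi}(\mathbf{P}_{\mathcal{Y}}(\mathbf{x})):\mathbf{x}\in\mathcal{B}\}$ and $\tilde{\mathcal{K}}_{\mathcal{Y}}(\mathcal{B})$ the convex hull of $\{\tilde{\boldsymbol{\Xi}}(\mathbf{P}_{\mathcal{Y}}(\mathbf{x})):\mathbf{x}\in\mathcal{B}\}$. Consider LP1: maximize $\boldsymbol{\lambda}\mathbf{g}^T$ over $\mathbf{g}\in\mathcal{K}_{\mathcal{Y}}(\mathcal{B})$, with output configuration $\mathbf{P}_{\mathcal{Y}}^{-1}(\boldsymbol{\Xi}^{-1}(\mathbf{g}_{\mathrm{opt}}))$ for the maximizer $\mathbf{g}_{\mathrm{opt}}$; and LP2: maximize $\tilde{\boldsymbol{\lambda}}\tilde{\mathbf{g}}^T$ over $\tilde{\mathbf{g}}\in\tilde{\mathcal{K}}_{\mathcal{Y}}(\mathcal{B})$, with output configuration $\mathbf{P}_{\mathcal{Y}}^{-1}(\tilde{\boldsymbol{\Xi}}^{-1}(\tilde{\mathbf{g}}_{\mathrm{opt}}))$ for the maximizer $\tilde{\mathbf{g}}_{\mathrm{opt}}$. Then LP2 produces the same (optimum) configuration output as LP1, namely a configuration $\mathbf{x}_{\mathrm{opt}}\in\mathcal{B}$ maximizing $\sum_{i\in\mathcal{Y}}\log h_i(x_i)$ over $\mathcal{B}$.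
   Context: This arises from the problem of maximizing a global function $u(\mathbf{x})=\prod_{i\in\mathcal{Y}}h_i(x_i)\prod_{j\in\mathcal{L}}[\mathbf{x}_j\in\mathcal{B}_j]$ over configurations $\mathbf{x}=(x_i)_{i\in\mathcal{I}}\in\prod_i\mathcal{A}_i$, where $\mathcal{Y}$ is the set of variables attached to degree-one (pendant) factor nodes of the factor graph, $h_i$ is the product of those pendant factors, and $\mathcal{B}$ is the set of configurations satisfying all non-pendant indicator factors; maximizing $u$ is equivalent to maximizing $\sum_{i\in\mathcal{Y}}\log h_i(x_i)$ over $\mathcal{B}$. $\mathbf{P}_{\mathcal{Y}}^{-1}$ denotes the inverse of $\mathbf{P}_{\mathcal{Y}}$ restricted to $\mathcal{B}$. *)

theory Defs
  imports "HOL-Analysis.Analysis" "HOL-Library.Function_Algebras"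
begin

text \<open>Real vectors indexed by an arbitrary coordinate type are modelled as functions
  into the reals; we equip them with the pointwise real vector space structure so that
  the library notion \<open>convex hull\<close> applies.\<close>

instantiation "fun" :: (type, real_vector) real_vector
begin
definition scaleR_fun :: "real \<Rightarrow> ('a \<Rightarrow> 'b) \<Rightarrow> 'a \<Rightarrow> 'b"
  where "scaleR_fun r f = (\<lambda>x. r *\<^sub>R f x)"
instance
  by standard (auto simp: scaleR_fun_def fun_eq_iff scaleR_add_right scaleR_add_left)
end

definition coords :: "'i set \<Rightarrow> ('i \<Rightarrow> 'a set) \<Rightarrow> ('i \<times> 'a) set" where
  "coords Y C = Sigma Y C"

text \<open>Indicator embedding Xi (with C = A) or tilde-Xi (with C i = A i - {alpha i}) of x_Y;
  coordinates outside \<open>coords Y C\<close> are 0.\<close>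
definition Xi :: "'i set \<Rightarrow> ('i \<Rightarrow> 'a set) \<Rightarrow> ('i \<Rightarrow> 'a) \<Rightarrow> ('i \<times> 'a \<Rightarrow> real)" where
  "Xi Y C xY = (\<lambda>(i, \<gamma>). if i \<in> Y \<and> \<gamma> \<in> C i then (if \<gamma> = xY i then 1 else 0) else 0)"

definition proj :: "'i set \<Rightarrow> ('i \<Rightarrow> 'a) \<Rightarrow> ('i \<Rightarrow> 'a)" where
  "proj Y x = restrict x Y"

definition dotp :: "('i \<times> 'a) set \<Rightarrow> ('i \<times> 'a \<Rightarrow> real) \<Rightarrow> ('i \<times> 'a \<Rightarrow> real) \<Rightarrow> real" where
  "dotp S l g = (\<Sum>p\<in>S. l p * g p)"

definition is_lp_max :: "('i \<times> 'a) set \<Rightarrow> ('i \<times> 'a \<Rightarrow> real) \<Rightarrow> ('i \<times> 'a \<Rightarrow> real) set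
    \<Rightarrow> ('i \<times> 'a \<Rightarrow> real) \<Rightarrow> bool" where
  "is_lp_max S l K g \<longleftrightarrow> g \<in> K \<and> (\<forall>g'\<in>K. dotp S l g' \<le> dotp S l g)"

end

theory Submission
  imports Defs
begin

text \<open>On an indicator vector the linear objective picks out one coordinate per variable, so
  both objectives equal \<open>\<Sum>i\<in>Y. log h\<^sub>i(x\<^sub>i)\<close>, up to the additive constant
  \<open>\<Sum>i\<in>Y. log h\<^sub>i(\<alpha>\<^sub>i)\<close> for the reduced one. A linear functional is maximized over the
  convex hull of a finite set exactly at those points of the set where it is maximal among them,
  because its sublevel sets are convex. Hence both LPs are maximized precisely at the images of
  the optimal configurations, and an optimal configuration exists since \<open>B\<close> is finite.\<close>

lemma dotp_add_scaleR:
  "dotp S l (u *\<^sub>R g + v *\<^sub>R k) = u * dotp S l g + v * dotp S l k"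
  by (simp add: dotp_def scaleR_fun_def algebra_simps sum.distrib sum_distrib_left)

lemma convex_dotp_le: "convex {g. dotp S l g \<le> M}"
proof (rule convexI)
  fix g k and u v :: real
  assume "g \<in> {g. dotp S l g \<le> M}" "k \<in> {g. dotp S l g \<le> M}" "0 \<le> u" "0 \<le> v" "u + v = 1"
  then have "u * dotp S l g + v * dotp S l k \<le> u * M + v * M"
    by (intro add_mono mult_left_mono) auto
  with \<open>u + v = 1\<close> show "u *\<^sub>R g + v *\<^sub>R k \<in> {g. dotp S l g \<le> M}"
    by (simp add: dotp_add_scaleR flip: distrib_right)
qed

lemma dotp_convex_hull_le:
  assumes "\<And>v. v \<in> V \<Longrightarrow> dotp S l v \<le> M" and "g \<in> convex hull V"
  shows "dotp S l g \<le> M"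
proof -
  have "convex hull V \<subseteq> {g. dotp S l g \<le> M}"
    using assms(1) by (intro hull_minimal convex_dotp_le) auto
  with assms(2) show ?thesis by auto
qed

lemma is_lp_max_convex_hull_image_iff:
  assumes "x \<in> B"
  shows "is_lp_max S l (convex hull (F ` B)) (F x) \<longleftrightarrow>
    (\<forall>x'\<in>B. dotp S l (F x') \<le> dotp S l (F x))"
  using assms hull_inc[of _ "F ` B"] dotp_convex_hull_le[of "F ` B"]
  unfolding is_lp_max_def by blast

lemma dotp_Xi_proj:
  assumes "finite Y" and "\<And>i. i \<in> Y \<Longrightarrow> finite (C i)"
  shows "dotp (coords Y C) l (Xi Y C (proj Y x)) = (\<Sum>i\<in>Y. if x i \<in> C i then l (i, x i) else 0)"
proof -
  have "dotp (coords Y C) l (Xi Y C (proj Y x))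
      = (\<Sum>i\<in>Y. \<Sum>\<gamma>\<in>C i. if \<gamma> = x i then l (i, \<gamma>) else 0)"
    unfolding dotp_def coords_def using assms
    by (subst sum.Sigma) (auto simp: Xi_def proj_def intro!: sum.cong)
  also have "\<dots> = (\<Sum>i\<in>Y. if x i \<in> C i then l (i, x i) else 0)"
    using assms(2) by (intro sum.cong refl) (simp add: sum.delta')
  finally show ?thesis .
qed

text \<open>The coordinate \<open>\<alpha> i\<close> omitted by the reduced embedding would carry weight \<open>ln 1 = 0\<close>.\<close>

lemma dotp_log_ratio_Xi_proj:
  assumes "finite Y" and "\<And>i. i \<in> Y \<Longrightarrow> finite (A i)"
    and "\<And>i. i \<in> Y \<Longrightarrow> x i \<in> A i" and "\<And>i. i \<in> Y \<Longrightarrow> \<alpha> i \<in> A i"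
    and "\<And>i a. i \<in> Y \<Longrightarrow> a \<in> A i \<Longrightarrow> h i a > 0"
  shows "dotp (coords Y (\<lambda>i. A i - {\<alpha> i})) (\<lambda>(i, a). ln (h i a / h i (\<alpha> i)))
      (Xi Y (\<lambda>i. A i - {\<alpha> i}) (proj Y x))
    = (\<Sum>i\<in>Y. ln (h i (x i))) - (\<Sum>i\<in>Y. ln (h i (\<alpha> i)))"
proof -
  have "dotp (coords Y (\<lambda>i. A i - {\<alpha> i})) (\<lambda>(i, a). ln (h i a / h i (\<alpha> i)))
      (Xi Y (\<lambda>i. A i - {\<alpha> i}) (proj Y x))
    = (\<Sum>i\<in>Y. if x i \<in> A i - {\<alpha> i} then ln (h i (x i) / h i (\<alpha> i)) else 0)"
    using assms(1,2) by (simp add: dotp_Xi_proj cong: if_cong)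
  also have "\<dots> = (\<Sum>i\<in>Y. ln (h i (x i)) - ln (h i (\<alpha> i)))"
    using assms(3-5) by (intro sum.cong) (auto simp: ln_divide_pos)
  finally show ?thesis
    by (simp add: sum_subtractf)
qed

lemma finite_ex_maximizer:
  fixes f :: "'a \<Rightarrow> 'b::linorder"
  assumes "finite B" and "B \<noteq> {}"
  obtains x where "x \<in> B" and "\<And>x'. x' \<in> B \<Longrightarrow> f x' \<le> f x"
proof -
  have "Max (f ` B) \<in> f ` B"
    using assms by (intro Max_in) auto
  then obtain x where "x \<in> B" and "f x = Max (f ` B)"
    by auto
  with assms(1) show ?thesis by (intro that) auto
qed

text \<open>The hypotheses \<open>card (A i) \<ge> 2\<close> and injectivity of \<open>proj Y\<close> on \<open>B\<close> only make the
  inverse maps of the informal statement well defined.\<close>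

theorem proposition1:
  fixes I :: "'i set" and A :: "'i \<Rightarrow> 'a set" and Y :: "'i set"
    and h :: "'i \<Rightarrow> 'a \<Rightarrow> real" and B :: "('i \<Rightarrow> 'a) set" and \<alpha> :: "'i \<Rightarrow> 'a"
  assumes finI: "finite I"
    and finA: "\<And>i. i \<in> I \<Longrightarrow> finite (A i)"
    and cardA: "\<And>i. i \<in> I \<Longrightarrow> card (A i) \<ge> 2"
    and YI: "Y \<subseteq> I"
    and hpos: "\<And>i a. i \<in> Y \<Longrightarrow> a \<in> A i \<Longrightarrow> h i a > 0"
    and BA: "B \<subseteq> (\<Pi>\<^sub>E i\<in>I. A i)"
    and inj: "inj_on (proj Y) B"
    and alpha: "\<And>i. i \<in> Y \<Longrightarrow> \<alpha> i \<in> A i"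
  defines "Am \<equiv> (\<lambda>i. A i - {\<alpha> i})"
    and "lam \<equiv> (\<lambda>(i, a). ln (h i a))"
    and "lamt \<equiv> (\<lambda>(i, a). ln (h i a / h i (\<alpha> i)))"
    and "K \<equiv> convex hull ((\<lambda>x. Xi Y A (proj Y x)) ` B)"
    and "Kt \<equiv> convex hull ((\<lambda>x. Xi Y (\<lambda>i. A i - {\<alpha> i}) (proj Y x)) ` B)"
  shows "(\<forall>x\<in>B.
            (is_lp_max (coords Y Am) lamt Kt (Xi Y Am (proj Y x))
               \<longleftrightarrow> is_lp_max (coords Y A) lam K (Xi Y A (proj Y x)))
          \<and> (is_lp_max (coords Y A) lam K (Xi Y A (proj Y x))
               \<longleftrightarrow> (\<forall>x'\<in>B. (\<Sum>i\<in>Y. ln (h i (x' i))) \<le> (\<Sum>i\<in>Y. ln (h i (x i))))))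
       \<and> (B \<noteq> {} \<longrightarrow> (\<exists>x\<in>B. is_lp_max (coords Y Am) lamt Kt (Xi Y Am (proj Y x))))"
proof -
  define obj where "obj x = (\<Sum>i\<in>Y. ln (h i (x i)))" for x
  have finY: "finite Y" and finAY: "\<And>i. i \<in> Y \<Longrightarrow> finite (A i)"
    using finI finA YI finite_subset by blast+
  have x_in_A: "x i \<in> A i" if "x \<in> B" "i \<in> Y" for x i
    using that BA YI by auto
  have dotp_lam: "dotp (coords Y A) lam (Xi Y A (proj Y x)) = obj x" if "x \<in> B" for x
    using finY finAY x_in_A[OF that]
    by (simp add: dotp_Xi_proj obj_def lam_def cong: sum.cong)
  have dotp_lamt: "dotp (coords Y Am) lamt (Xi Y Am (proj Y x))
      = obj x - (\<Sum>i\<in>Y. ln (h i (\<alpha> i)))" if "x \<in> B" for x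
    unfolding Am_def lamt_def obj_def
    using finY finAY x_in_A[OF that] alpha hpos by (rule dotp_log_ratio_Xi_proj)
  have lp_max: "is_lp_max (coords Y A) lam K (Xi Y A (proj Y x)) \<longleftrightarrow> (\<forall>x'\<in>B. obj x' \<le> obj x)"
    if "x \<in> B" for x
    using is_lp_max_convex_hull_image_iff[OF that, of "coords Y A" lam "\<lambda>x. Xi Y A (proj Y x)"]
    by (simp add: K_def that dotp_lam)
  have lp_max_reduced: "is_lp_max (coords Y Am) lamt Kt (Xi Y Am (proj Y x))
      \<longleftrightarrow> (\<forall>x'\<in>B. obj x' \<le> obj x)" if "x \<in> B" for x
  proof -
    have "Kt = convex hull ((\<lambda>x. Xi Y Am (proj Y x)) ` B)"
      by (simp add: Kt_def Am_def)
    then show ?thesis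
      using is_lp_max_convex_hull_image_iff[OF that, of "coords Y Am" lamt "\<lambda>x. Xi Y Am (proj Y x)"]
      by (simp add: that dotp_lamt)
  qed
  have "finite B"
    using finite_subset[OF BA] finite_PiE[OF finI] finA by blast
  then have "\<exists>x\<in>B. \<forall>x'\<in>B. obj x' \<le> obj x" if "B \<noteq> {}"
    using finite_ex_maximizer[of B obj] that by metis
  with lp_max lp_max_reduced show ?thesis
    unfolding obj_def by blast
qed

end
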